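(* Let $G=(V,E)$ be an acyclic finite directed graph, $\Gamma\subset V$ containing all sinks and sources with $V\setminus\Gamma\ne\emptyset$, and let $z=(z_v)_{v\in\Gamma}$ with each $z_v$ a positive multiple of $I_d$. Then at any critical point $x$ of $\Phi_d$ restricted to $\mathcal P_d^V(z)$ such that every $x_v$ ($v\in V$) is a positive multiple of $I_d$, the Hessian of this restricted function (with respect to the independent real variables $x_v(i,j)$, $v\in V\setminus\Gamma$, $1\le i\le j\le d$) is positive definite.
   Context: $v\to w$ denotes an edge; sinks have no outgoing edges, sources no incoming edges. $\mathcal P_d$: $d\times d$ real symmetric positive definite matrices. $\mathcal P_d^V(z)=\{x=(x_v)_{v\in V}\in\mathcal P_d^V:x_v=z_v\ \forall v\in\Gamma\}$. $\Phi_d(x)=\sum_{v\to w}\operatorname{tr}[x_vx_w^{-1}]$ for $x\in\mathcal P_d^V$. *)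

theory Defs
  imports "HOL-Analysis.Analysis"
begin

definition sinks :: "'v set \<Rightarrow> ('v \<times> 'v) set \<Rightarrow> 'v set" where
  "sinks V E = {v \<in> V. \<forall>w. (v, w) \<notin> E}"

definition sources :: "'v set \<Rightarrow> ('v \<times> 'v) set \<Rightarrow> 'v set" where
  "sources V E = {v \<in> V. \<forall>w. (w, v) \<notin> E}"

definition Phi :: "('v \<times> 'v) set \<Rightarrow> ('v \<Rightarrow> real^'d::{finite,linorder}^'d::{finite,linorder}) \<Rightarrow> real" where
  "Phi E x = (\<Sum>(v, w)\<in>E. trace (x v ** matrix_inv (x w)))"

definition sym_of :: "('d::{finite,linorder} \<Rightarrow> 'd::{finite,linorder} \<Rightarrow> real) \<Rightarrow> real^'d::{finite,linorder}^'d::{finite,linorder}" where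
  "sym_of y = (\<chi> i j. if i \<le> j then y i j else y j i)"

(* the point of P_d^V(z) determined by the free coordinates y (used for v \<notin> \<Gamma>) *)
definition assemble :: "'v set \<Rightarrow> ('v \<Rightarrow> real^'d::{finite,linorder}^'d::{finite,linorder}) \<Rightarrow> ('v \<Rightarrow> 'd::{finite,linorder} \<Rightarrow> 'd::{finite,linorder} \<Rightarrow> real)
    \<Rightarrow> 'v \<Rightarrow> real^'d::{finite,linorder}^'d::{finite,linorder}" where
  "assemble \<Gamma> z y v = (if v \<in> \<Gamma> then z v else sym_of (y v))"

definition Phi_restr :: "('v \<times> 'v) set \<Rightarrow> 'v set \<Rightarrow> ('v \<Rightarrow> real^'d::{finite,linorder}^'d::{finite,linorder})
    \<Rightarrow> ('v \<Rightarrow> 'd::{finite,linorder} \<Rightarrow> 'd::{finite,linorder} \<Rightarrow> real) \<Rightarrow> real" where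
  "Phi_restr E \<Gamma> z y = Phi E (assemble \<Gamma> z y)"

definition coords :: "'v set \<Rightarrow> 'v set \<Rightarrow> ('v \<times> 'd::{finite,linorder} \<times> 'd::{finite,linorder}) set" where
  "coords V \<Gamma> = {(v, i, j). v \<in> V - \<Gamma> \<and> i \<le> j}"

definition shift :: "('v \<Rightarrow> 'd::{finite,linorder} \<Rightarrow> 'd::{finite,linorder} \<Rightarrow> real) \<Rightarrow> 'v \<times> 'd::{finite,linorder} \<times> 'd::{finite,linorder} \<Rightarrow> real \<Rightarrow> ('v \<Rightarrow> 'd::{finite,linorder} \<Rightarrow> 'd::{finite,linorder} \<Rightarrow> real)" where
  "shift y a t = (case a of (v, i, j) \<Rightarrow> y(v := (y v)(i := (y v i)(j := y v i j + t))))"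

definition partial :: "(('v \<Rightarrow> 'd::{finite,linorder} \<Rightarrow> 'd::{finite,linorder} \<Rightarrow> real) \<Rightarrow> real) \<Rightarrow> ('v \<Rightarrow> 'd::{finite,linorder} \<Rightarrow> 'd::{finite,linorder} \<Rightarrow> real)
    \<Rightarrow> 'v \<times> 'd::{finite,linorder} \<times> 'd::{finite,linorder} \<Rightarrow> real" where
  "partial f y a = deriv (\<lambda>t. f (shift y a t)) 0"

definition hessian :: "(('v \<Rightarrow> 'd::{finite,linorder} \<Rightarrow> 'd::{finite,linorder} \<Rightarrow> real) \<Rightarrow> real) \<Rightarrow> ('v \<Rightarrow> 'd::{finite,linorder} \<Rightarrow> 'd::{finite,linorder} \<Rightarrow> real)
    \<Rightarrow> 'v \<times> 'd::{finite,linorder} \<times> 'd::{finite,linorder} \<Rightarrow> 'v \<times> 'd::{finite,linorder} \<times> 'd::{finite,linorder} \<Rightarrow> real" where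
  "hessian f y a b = deriv (\<lambda>t. partial f (shift y b t) a) 0"

end

theory Submission
  imports Defs
begin

(*
  Write x_v = c_v I. Along a symmetric direction H, vanishing on \<Gamma>, the second derivative of
  tr[x_v x_w^-1] is 2 c_v tr(H_w^2) / c_w^3 - 2 tr(H_v H_w) / c_w^2, so the Hessian form of \<Phi>_d
  at x is the sum over all entries (i,k) of the Hessian form of the scalar function
  \<Phi>_1(t) = \<Sigma>_{v->w} t_v / t_w at c in the direction H(i,k); moreover the critical point
  equations for the diagonal coordinates say exactly that c is critical for \<Phi>_1.
  At such a critical point the scalar form is \<Sigma>_{v->w} (c_v / c_w) (h_v/c_v - h_w/c_w)^2:
  the difference is a combination of the partial derivatives of \<Phi>_1, which vanish off \<Gamma>,
  with weights that vanish on \<Gamma>. If the form is zero then h/c is constant along edges, and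
  since every path out of a free vertex of the acyclic graph ends in a sink, which lies in
  \<Gamma>, h vanishes.
*)

lemma matrix_inv_right:
  fixes A :: "real^'n^'n"
  assumes "invertible A"
  shows "A ** matrix_inv A = mat 1"
  using someI_ex[OF assms[unfolded invertible_def]] unfolding matrix_inv_def by auto

lemma matrix_inv_left:
  fixes A :: "real^'n^'n"
  assumes "invertible A"
  shows "matrix_inv A ** A = mat 1"
  using someI_ex[OF assms[unfolded invertible_def]] unfolding matrix_inv_def by auto

lemma matrix_inv_eqI:
  fixes A B :: "real^'n^'n"
  assumes "invertible A" and "A ** B = mat 1"
  shows "matrix_inv A = B"
  by (metis assms matrix_inv_left matrix_mul_assoc matrix_mul_lid matrix_mul_rid)

lemma invertible_scalar_mat:
  "c \<noteq> 0 \<Longrightarrow> invertible (c *\<^sub>R (mat 1 :: real^'n^'n))"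
  unfolding invertible_def
  by (rule exI[of _ "(1/c) *\<^sub>R mat 1"]) (simp add: matrix_scalar_ac flip: scalar_matrix_assoc)

lemma matrix_inv_scalar_mat:
  "c \<noteq> 0 \<Longrightarrow> matrix_inv (c *\<^sub>R (mat 1 :: real^'n^'n)) = (1/c) *\<^sub>R mat 1"
  by (rule matrix_inv_eqI[OF invertible_scalar_mat]) (simp_all add: matrix_scalar_ac flip: scalar_matrix_assoc)

lemma matrix_inv_cramer:
  fixes A :: "real^'n^'n"
  assumes "det A \<noteq> 0"
  shows "matrix_inv A $ k $ j = det (\<chi> i l. if l = k then mat 1 $ i $ j else A $ i $ l) / det A"
proof -
  define x where "x = (\<chi> k. matrix_inv A $ k $ j)"
  have "A *v x = (\<chi> i. mat 1 $ i $ j)"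
    using matrix_inv_right[OF assms[folded invertible_det_nz]]
    by (simp add: x_def vec_eq_iff matrix_vector_mult_def matrix_matrix_mult_def flip: vec_eq_iff)
       (metis (no_types, lifting) vec_lambda_beta)
  then have "x = (\<chi> k. det (\<chi> i l. if l = k then (\<chi> i. mat 1 $ i $ j) $ i else A $ i $ l) / det A)"
    using cramer[OF assms] by blast
  then show ?thesis
    unfolding x_def vec_eq_iff by (simp cong: if_cong)
qed

lemma trace_scaleR: "trace (c *\<^sub>R (A::real^'n^'n)) = c * trace A"
  by (simp add: trace_def sum_distrib_left)

lemma trace_uminus: "trace (- (A::real^'n^'n)) = - trace A"
  by (simp add: trace_def sum_negf)

lemma matrix_mul_uminus_left: "(- A) ** (B::real^'n^'k) = - (A ** B)" for A :: "real^'k^'m"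
  by (simp add: matrix_matrix_mult_def vec_eq_iff sum_negf)

lemma matrix_mul_uminus_right: "A ** (- B) = - (A ** (B::real^'n^'k))" for A :: "real^'k^'m"
  by (simp add: matrix_matrix_mult_def vec_eq_iff sum_negf)

lemma trace_sum_scaleR_bilinear:
  fixes X Y :: "'a \<Rightarrow> real^'n^'n"
  assumes "finite S"
  shows "trace ((\<Sum>a\<in>S. h a *\<^sub>R X a) ** (\<Sum>b\<in>S. h b *\<^sub>R Y b)) = (\<Sum>a\<in>S. \<Sum>b\<in>S. h a * h b * trace (X a ** Y b))"
proof -
  have tr: "trace (P ** Q) = (\<Sum>i\<in>UNIV. \<Sum>k\<in>UNIV. P $ i $ k * Q $ k $ i)" for P Q :: "real^'n^'n"
    by (simp add: trace_def matrix_matrix_mult_def)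
  have "trace ((\<Sum>a\<in>S. h a *\<^sub>R X a) ** (\<Sum>b\<in>S. h b *\<^sub>R Y b))
      = (\<Sum>i\<in>UNIV. \<Sum>k\<in>UNIV. \<Sum>a\<in>S. \<Sum>b\<in>S. h a * h b * (X a $ i $ k * Y b $ k $ i))"
    unfolding tr by (simp add: sum_component sum_product mult_ac)
  also have "\<dots> = (\<Sum>a\<in>S. \<Sum>b\<in>S. \<Sum>i\<in>UNIV. \<Sum>k\<in>UNIV. h a * h b * (X a $ i $ k * Y b $ k $ i))"
    by (subst (2) sum.swap, subst sum.swap, subst (2 3) sum.swap) (rule refl)
  also have "\<dots> = (\<Sum>a\<in>S. \<Sum>b\<in>S. h a * h b * trace (X a ** Y b))"
    unfolding tr by (simp add: sum_distrib_left)
  finally show ?thesis .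
qed

lemma trace_mul_symmetric:
  assumes "\<And>i k. N $ k $ i = N $ i $ k"
  shows "trace (M ** (N::real^'n^'n)) = (\<Sum>i\<in>UNIV. \<Sum>k\<in>UNIV. M $ i $ k * N $ i $ k)"
  using assms by (simp add: trace_def matrix_matrix_mult_def)

definition has_matrix_derivative :: "(real \<Rightarrow> real^'n^'m) \<Rightarrow> real^'n^'m \<Rightarrow> real \<Rightarrow> bool" where
  "has_matrix_derivative F F' t0 \<longleftrightarrow> (\<forall>i j. ((\<lambda>t. F t $ i $ j) has_field_derivative F' $ i $ j) (at t0))"

lemma has_matrix_derivative_const: "has_matrix_derivative (\<lambda>t. A) 0 t0"
  unfolding has_matrix_derivative_def by (auto intro!: derivative_eq_intros)

lemma has_matrix_derivative_affine: "has_matrix_derivative (\<lambda>t. A + t *\<^sub>R P) P t0"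
  unfolding has_matrix_derivative_def by (auto intro!: derivative_eq_intros)

lemma has_matrix_derivative_mult:
  fixes F :: "real \<Rightarrow> real^'k^'m" and G :: "real \<Rightarrow> real^'n^'k"
  assumes "has_matrix_derivative F F' t0" and "has_matrix_derivative G G' t0"
  shows "has_matrix_derivative (\<lambda>t. F t ** G t) (F' ** G t0 + F t0 ** G') t0"
  unfolding has_matrix_derivative_def
proof (intro allI)
  fix i j
  have "((\<lambda>t. \<Sum>k\<in>UNIV. F t $ i $ k * G t $ k $ j) has_field_derivative
     (\<Sum>k\<in>UNIV. F' $ i $ k * G t0 $ k $ j + G' $ k $ j * F t0 $ i $ k)) (at t0)"
    using assms unfolding has_matrix_derivative_def by (auto intro!: derivative_eq_intros)
  moreover have "(\<Sum>k\<in>UNIV. F' $ i $ k * G t0 $ k $ j + G' $ k $ j * F t0 $ i $ k)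
      = (F' ** G t0 + F t0 ** G') $ i $ j"
    by (simp add: matrix_matrix_mult_def sum.distrib mult.commute)
  ultimately show "((\<lambda>t. (F t ** G t) $ i $ j) has_field_derivative (F' ** G t0 + F t0 ** G') $ i $ j) (at t0)"
    by (simp add: matrix_matrix_mult_def)
qed

lemma has_matrix_derivative_trace:
  "has_matrix_derivative F F' t0 \<Longrightarrow> ((\<lambda>t. trace (F t)) has_field_derivative trace F') (at t0)"
  unfolding has_matrix_derivative_def trace_def by (auto intro!: derivative_eq_intros)

lemma has_matrix_derivative_cong_ev:
  assumes "eventually (\<lambda>t. F t = G t) (nhds t0)" and "has_matrix_derivative F F' t0"
  shows "has_matrix_derivative G F' t0"
  unfolding has_matrix_derivative_def
proof (intro allI)
  fix i j
  have ev: "eventually (\<lambda>t. F t $ i $ j = G t $ i $ j) (nhds t0)"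
    using assms(1) by (rule eventually_mono) simp
  show "((\<lambda>t. G t $ i $ j) has_field_derivative F' $ i $ j) (at t0)"
    using DERIV_cong_ev[OF refl ev refl] assms(2) unfolding has_matrix_derivative_def by blast
qed

lemma has_matrix_derivative_unique:
  "has_matrix_derivative F A t0 \<Longrightarrow> has_matrix_derivative F B t0 \<Longrightarrow> A = B"
  unfolding has_matrix_derivative_def vec_eq_iff using DERIV_unique by blast

lemma differentiable_prod:
  fixes f :: "'i \<Rightarrow> real \<Rightarrow> real"
  assumes "finite S" and "\<And>i. i \<in> S \<Longrightarrow> f i differentiable (at t0)"
  shows "(\<lambda>t. \<Prod>i\<in>S. f i t) differentiable (at t0)"
  using assms by (induction S rule: finite_induct) auto

lemma det_differentiable:
  fixes F :: "real \<Rightarrow> real^'n^'n"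
  assumes "\<And>i j. (\<lambda>t. F t $ i $ j) differentiable (at t0)"
  shows "(\<lambda>t. det (F t)) differentiable (at t0)"
  unfolding det_def
  by (intro differentiable_sum differentiable_mult differentiable_prod ballI differentiable_const
       finite_permutations assms) simp_all

lemma has_matrix_derivative_imp_differentiable:
  "has_matrix_derivative F F' t0 \<Longrightarrow> (\<lambda>t. F t $ i $ j) differentiable (at t0)"
  unfolding has_matrix_derivative_def real_differentiable_def by blast

lemma eventually_det_nonzero:
  fixes Y :: "real \<Rightarrow> real^'n^'n"
  assumes "has_matrix_derivative Y Y' t0" and "invertible (Y t0)"
  shows "eventually (\<lambda>t. det (Y t) \<noteq> 0) (nhds t0)"
proof -
  have "(\<lambda>t. det (Y t)) differentiable (at t0)"
    using det_differentiable has_matrix_derivative_imp_differentiable[OF assms(1)] by blast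
  then have "isCont (\<lambda>t. det (Y t)) t0"
    by (simp add: differentiable_imp_continuous_within)
  moreover have "det (Y t0) \<noteq> 0"
    using assms(2) invertible_det_nz by blast
  ultimately obtain e where "e > 0" "\<forall>t. dist t0 t < e \<longrightarrow> det (Y t) \<noteq> 0"
    using continuous_at_avoid by blast
  then show ?thesis
    unfolding eventually_nhds_metric by (auto simp: dist_commute)
qed

lemma has_matrix_derivative_inverse:
  fixes Y :: "real \<Rightarrow> real^'n^'n"
  assumes Y: "has_matrix_derivative Y Y' t0" and inv: "invertible (Y t0)"
  shows "has_matrix_derivative (\<lambda>t. matrix_inv (Y t)) (- (matrix_inv (Y t0) ** Y' ** matrix_inv (Y t0))) t0"
proof -
  have ev: "eventually (\<lambda>t. det (Y t) \<noteq> 0) (nhds t0)"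
    using eventually_det_nonzero[OF assms] .
  have "\<exists>d. ((\<lambda>t. matrix_inv (Y t) $ k $ j) has_field_derivative d) (at t0)" for k j
  proof -
    \<comment> \<open>Cramer's rule exhibits the entries of the inverse as quotients of determinants.\<close>
    have "(\<lambda>t. (\<chi> i l. if l = k then mat 1 $ i $ j else Y t $ i $ l) $ i $ l) differentiable (at t0)" for i l
      using has_matrix_derivative_imp_differentiable[OF Y] by (cases "l = k") simp_all
    then have "(\<lambda>t. det (\<chi> i l. if l = k then mat 1 $ i $ j else Y t $ i $ l) / det (Y t)) differentiable (at t0)"
      using has_matrix_derivative_imp_differentiable[OF Y] invertible_det_nz[of "Y t0"] inv
      by (intro differentiable_divide det_differentiable) simp_all
    then obtain d where
      "((\<lambda>t. det (\<chi> i l. if l = k then mat 1 $ i $ j else Y t $ i $ l) / det (Y t)) has_field_derivative d) (at t0)"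
      unfolding real_differentiable_def by blast
    moreover have ev_eq: "eventually (\<lambda>t. det (\<chi> i l. if l = k then mat 1 $ i $ j else Y t $ i $ l) / det (Y t)
        = matrix_inv (Y t) $ k $ j) (nhds t0)"
      using ev by (rule eventually_mono) (simp add: matrix_inv_cramer)
    ultimately show ?thesis
      using DERIV_cong_ev[OF refl ev_eq refl] by blast
  qed
  then obtain D where "\<And>k j. ((\<lambda>t. matrix_inv (Y t) $ k $ j) has_field_derivative D k j) (at t0)"
    by metis
  then have D: "has_matrix_derivative (\<lambda>t. matrix_inv (Y t)) (\<chi> k j. D k j) t0"
    unfolding has_matrix_derivative_def by simp
  have YD0: "has_matrix_derivative (\<lambda>t. Y t ** matrix_inv (Y t)) 0 t0"
    by (rule has_matrix_derivative_cong_ev[OF _ has_matrix_derivative_const[of "mat 1"]])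
       (use ev in \<open>auto elim!: eventually_mono simp: matrix_inv_right invertible_det_nz[symmetric]\<close>)
  have "Y' ** matrix_inv (Y t0) + Y t0 ** (\<chi> k j. D k j) = 0"
    using has_matrix_derivative_unique[OF has_matrix_derivative_mult[OF Y D] YD0] .
  then have "Y t0 ** (\<chi> k j. D k j) = - (Y' ** matrix_inv (Y t0))"
    by (simp add: eq_neg_iff_add_eq_0 add.commute)
  then have "matrix_inv (Y t0) ** (Y t0 ** (\<chi> k j. D k j)) = matrix_inv (Y t0) ** (- (Y' ** matrix_inv (Y t0)))"
    by simp
  then have "(\<chi> k j. D k j) = - (matrix_inv (Y t0) ** Y' ** matrix_inv (Y t0))"
    by (simp add: matrix_mul_assoc matrix_inv_left[OF inv] matrix_mul_uminus_right)
  with D show ?thesis by simp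
qed

(* The partial derivative of \<Phi>_1(t) = \<Sigma>_{v->w} t_v / t_w with respect to t_u at t = c. *)
definition scalar_gradient :: "('v \<times> 'v) set \<Rightarrow> ('v \<Rightarrow> real) \<Rightarrow> 'v \<Rightarrow> real" where
  "scalar_gradient E c u = (\<Sum>(v, w)\<in>E. (if v = u then 1 / c w else 0) - (if w = u then c v / (c w)^2 else 0))"

(* Half the Hessian form of \<Phi>_1 at c in the direction x. *)
definition edge_quadratic_form :: "('v \<times> 'v) set \<Rightarrow> ('v \<Rightarrow> real) \<Rightarrow> ('v \<Rightarrow> real) \<Rightarrow> real" where
  "edge_quadratic_form E c x = (\<Sum>(v, w)\<in>E. c v * (x w)^2 / (c w)^3 - x v * x w / (c w)^2)"

lemma sum_mult_scalar_gradient: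
  assumes "finite V" and "E \<subseteq> V \<times> V"
  shows "(\<Sum>u\<in>V. f u * scalar_gradient E c u) = (\<Sum>(v, w)\<in>E. f v / c w - f w * c v / (c w)^2)"
proof -
  have "(\<Sum>u\<in>V. f u * scalar_gradient E c u)
      = (\<Sum>(v, w)\<in>E. \<Sum>u\<in>V. (if v = u then f u / c w else 0) - (if w = u then f u * c v / (c w)^2 else 0))"
    unfolding scalar_gradient_def sum_distrib_left split_def
    by (subst sum.swap) (simp add: right_diff_distrib if_distrib[of "\<lambda>t. f _ * t"] cong: if_cong)
  also have "\<dots> = (\<Sum>(v, w)\<in>E. f v / c w - f w * c v / (c w)^2)"
    using assms by (intro sum.cong refl) (auto simp: sum_subtractf)
  finally show ?thesis .
qed

lemma edge_quadratic_form_decompose: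
  assumes "finite V" and "E \<subseteq> V \<times> V" and "\<forall>v\<in>V. c v > 0"
  shows "edge_quadratic_form E c x
    = (\<Sum>(v, w)\<in>E. c v / (2 * c w) * (x v / c v - x w / c w)^2)
      - (\<Sum>u\<in>V. (x u)^2 / (2 * c u) * scalar_gradient E c u)"
proof -
  have "c v * (x w)^2 / (c w)^3 - x v * x w / (c w)^2
      = c v / (2 * c w) * (x v / c v - x w / c w)^2 - ((x v)^2 / (2 * c v) / c w - (x w)^2 / (2 * c w) * c v / (c w)^2)"
    if "(v, w) \<in> E" for v w
  proof -
    have "c v > 0" "c w > 0"
      using that assms(2,3) by auto
    then show ?thesis
      by (simp add: field_simps power2_eq_square power3_eq_cube)
  qed
  then show ?thesis
    unfolding edge_quadratic_form_def sum_mult_scalar_gradient[OF assms(1,2)] sum_subtractf[symmetric]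
    by (intro sum.cong refl) auto
qed

lemma acyclic_edge_constant_vanishes:
  assumes "finite V" and "E \<subseteq> V \<times> V" and "acyclic E" and "sinks V E \<subseteq> \<Gamma>"
    and "\<forall>v\<in>\<Gamma>. f v = 0" and "\<forall>(v, w)\<in>E. f v = f w"
  shows "\<forall>v\<in>V. f v = 0"
proof -
  have "wf (E\<inverse>)"
    using assms(1,2,3) finite_subset finite_acyclic_wf_converse by blast
  then have "v \<in> V \<longrightarrow> f v = 0" for v
  proof (induction v rule: wf_induct_rule)
    case (less v)
    show ?case
    proof (intro impI)
      assume v: "v \<in> V"
      show "f v = 0"
      proof (cases "v \<in> \<Gamma>")
        case True
        then show ?thesis using assms(5) by blast
      next
        case False
        \<comment> \<open>A vertex outside \<open>\<Gamma>\<close> is not a sink, so the induction descends along an outgoing edge.\<close>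
        then obtain w where w: "(v, w) \<in> E"
          using v assms(4) unfolding sinks_def by auto
        then have "f w = 0"
          using less assms(2) by auto
        then show ?thesis
          using w assms(6) by auto
      qed
    qed
  qed
  then show ?thesis by blast
qed

lemma edge_quadratic_form_at_critical:
  assumes "finite V" and "E \<subseteq> V \<times> V" and "\<forall>v\<in>V. c v > 0"
    and "\<forall>v\<in>\<Gamma>. x v = 0" and "\<forall>u\<in>V - \<Gamma>. scalar_gradient E c u = 0"
  shows "edge_quadratic_form E c x = (\<Sum>(v, w)\<in>E. c v / (2 * c w) * (x v / c v - x w / c w)^2)"
proof -
  have "(x u)^2 / (2 * c u) * scalar_gradient E c u = 0" if "u \<in> V" for u
    using that assms(4,5) by (cases "u \<in> \<Gamma>") auto
  then have "(\<Sum>u\<in>V. (x u)^2 / (2 * c u) * scalar_gradient E c u) = 0"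
    by (intro sum.neutral ballI)
  then show ?thesis
    unfolding edge_quadratic_form_decompose[OF assms(1-3)] by simp
qed

lemma edge_quadratic_form_nonneg:
  assumes "finite V" and "E \<subseteq> V \<times> V" and "\<forall>v\<in>V. c v > 0"
    and "\<forall>v\<in>\<Gamma>. x v = 0" and "\<forall>u\<in>V - \<Gamma>. scalar_gradient E c u = 0"
  shows "edge_quadratic_form E c x \<ge> 0"
proof -
  have "c v / (2 * c w) * (x v / c v - x w / c w)^2 \<ge> 0" if "(v, w) \<in> E" for v w
  proof -
    have "c v > 0" "c w > 0"
      using that assms(2,3) by auto
    then show ?thesis by simp
  qed
  then show ?thesis
    unfolding edge_quadratic_form_at_critical[OF assms] by (intro sum_nonneg) auto
qed

lemma edge_quadratic_form_pos:
  assumes "finite V" and "E \<subseteq> V \<times> V" and "acyclic E" and "sinks V E \<subseteq> \<Gamma>" and "\<forall>v\<in>V. c v > 0"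
    and "\<forall>v\<in>\<Gamma>. x v = 0" and "\<forall>u\<in>V - \<Gamma>. scalar_gradient E c u = 0" and "\<exists>u\<in>V. x u \<noteq> 0"
  shows "edge_quadratic_form E c x > 0"
proof (rule ccontr)
  assume "\<not> edge_quadratic_form E c x > 0"
  then have sum0: "(\<Sum>(v, w)\<in>E. c v / (2 * c w) * (x v / c v - x w / c w)^2) = 0"
    using edge_quadratic_form_nonneg[OF assms(1,2,5-7)] edge_quadratic_form_at_critical[OF assms(1,2,5-7)]
    by simp
  have weight_pos: "c v / (2 * c w) > 0" if "(v, w) \<in> E" for v w
  proof -
    have "c v > 0" "c w > 0"
      using that assms(2,5) by auto
    then show ?thesis by simp
  qed
  have "x v / c v = x w / c w" if "(v, w) \<in> E" for v w
  proof -
    have "finite E"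
      using assms(1,2) finite_subset by blast
    moreover have "\<forall>(v, w)\<in>E. c v / (2 * c w) * (x v / c v - x w / c w)^2 \<ge> 0"
      using weight_pos by (blast intro: mult_nonneg_nonneg less_imp_le zero_le_power2)
    ultimately have "c v / (2 * c w) * (x v / c v - x w / c w)^2 = 0"
      using sum0 that sum_nonneg_eq_0_iff[of E "\<lambda>(v, w). c v / (2 * c w) * (x v / c v - x w / c w)^2"]
      by fastforce
    then show ?thesis
      using weight_pos[OF that] by (metis mult_eq_0_iff power_eq_0_iff right_minus_eq less_irrefl)
  qed
  then have "\<forall>v\<in>V. x v / c v = 0"
    using acyclic_edge_constant_vanishes[OF assms(1-4), of "\<lambda>v. x v / c v"] assms(6) by auto
  then show False
    using assms(5,8) by fastforce
qed

lemma has_field_derivative_Phi_affine: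
  fixes B R :: "'v \<Rightarrow> real^'d::{finite,linorder}^'d::{finite,linorder}"
  assumes "\<forall>(v, w)\<in>E. invertible (B w + t0 *\<^sub>R R w)"
  shows "((\<lambda>t. Phi E (\<lambda>v. B v + t *\<^sub>R R v)) has_field_derivative
     (\<Sum>(v, w)\<in>E. trace (R v ** matrix_inv (B w + t0 *\<^sub>R R w))
        - trace ((B v + t0 *\<^sub>R R v) ** (matrix_inv (B w + t0 *\<^sub>R R w) ** R w ** matrix_inv (B w + t0 *\<^sub>R R w))))) (at t0)"
proof -
  have edge: "((\<lambda>t. trace ((B v + t *\<^sub>R R v) ** matrix_inv (B w + t *\<^sub>R R w))) has_field_derivative
     trace (R v ** matrix_inv (B w + t0 *\<^sub>R R w))
       - trace ((B v + t0 *\<^sub>R R v) ** (matrix_inv (B w + t0 *\<^sub>R R w) ** R w ** matrix_inv (B w + t0 *\<^sub>R R w)))) (at t0)"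
    if "(v, w) \<in> E" for v w
  proof -
    have "invertible (B w + t0 *\<^sub>R R w)"
      using that assms by auto
    from has_matrix_derivative_inverse[OF has_matrix_derivative_affine this]
    have "has_matrix_derivative (\<lambda>t. matrix_inv (B w + t *\<^sub>R R w))
        (- (matrix_inv (B w + t0 *\<^sub>R R w) ** R w ** matrix_inv (B w + t0 *\<^sub>R R w))) t0" .
    from has_matrix_derivative_trace[OF has_matrix_derivative_mult[OF has_matrix_derivative_affine this]]
    show ?thesis
      by (rule DERIV_cong) (simp only: trace_add matrix_mul_uminus_right trace_uminus diff_conv_add_uminus)
  qed
  show ?thesis
    unfolding Phi_def
  proof (rule DERIV_sum)
    fix e assume "e \<in> E"
    then show "((\<lambda>t. case e of (v, w) \<Rightarrow> trace ((B v + t *\<^sub>R R v) ** matrix_inv (B w + t *\<^sub>R R w))) has_field_derivative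
      (case e of (v, w) \<Rightarrow> trace (R v ** matrix_inv (B w + t0 *\<^sub>R R w))
        - trace ((B v + t0 *\<^sub>R R v) ** (matrix_inv (B w + t0 *\<^sub>R R w) ** R w ** matrix_inv (B w + t0 *\<^sub>R R w))))) (at t0)"
      using edge[of "fst e" "snd e"] by (simp add: split_beta)
  qed
qed

definition coord_dir :: "'v set \<Rightarrow> 'v \<times> 'd::{finite,linorder} \<times> 'd::{finite,linorder} \<Rightarrow> 'v \<Rightarrow> real^'d::{finite,linorder}^'d::{finite,linorder}" where
  "coord_dir \<Gamma> a v = (case a of (u, i, j) \<Rightarrow>
     if v = u \<and> v \<notin> \<Gamma> then sym_of (\<lambda>p q. if p = i \<and> q = j then 1 else 0) else 0)"

lemma sym_of_fun_upd:
  "sym_of (f(i := (f i)(j := f i j + t))) = sym_of f + t *\<^sub>R sym_of (\<lambda>p q. if p = i \<and> q = j then 1 else 0)"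
  unfolding sym_of_def vec_eq_iff by auto

lemma sym_of_symmetric: "sym_of f $ i $ k = sym_of f $ k $ i"
  by (cases i k rule: linorder_cases) (auto simp: sym_of_def)

lemma coord_dir_symmetric: "coord_dir \<Gamma> a v $ i $ k = coord_dir \<Gamma> a v $ k $ i"
  by (cases a) (simp add: coord_dir_def sym_of_symmetric)

lemma assemble_shift: "assemble \<Gamma> z (shift y a t) = (\<lambda>v. assemble \<Gamma> z y v + t *\<^sub>R coord_dir \<Gamma> a v)"
proof
  fix v
  obtain u i j where a: "a = (u, i, j)"
    by (cases a) auto
  show "assemble \<Gamma> z (shift y a t) v = assemble \<Gamma> z y v + t *\<^sub>R coord_dir \<Gamma> a v"
    by (cases "v \<in> \<Gamma>"; cases "v = u") (simp_all add: assemble_def coord_dir_def a shift_def sym_of_fun_upd)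
qed

lemma partial_Phi_restr:
  assumes "\<forall>(v, w)\<in>E. invertible (assemble \<Gamma> z y w)"
  shows "partial (Phi_restr E \<Gamma> z) y a =
    (\<Sum>(v, w)\<in>E. trace (coord_dir \<Gamma> a v ** matrix_inv (assemble \<Gamma> z y w))
      - trace (assemble \<Gamma> z y v ** (matrix_inv (assemble \<Gamma> z y w) ** coord_dir \<Gamma> a w ** matrix_inv (assemble \<Gamma> z y w))))"
  unfolding partial_def Phi_restr_def assemble_shift
  by (rule DERIV_imp_deriv) (use has_field_derivative_Phi_affine[of E "assemble \<Gamma> z y" 0 "coord_dir \<Gamma> a"] assms in simp)

(* The v->w summand of partial_Phi_restr in direction Q, differentiated along P at a scalar point. *)
lemma has_field_derivative_edge_partial_at_scalar:
  fixes Pv Pw Qv Qw :: "real^'n^'n"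
  assumes cw: "cw > 0"
  shows "((\<lambda>t. trace (Qv ** matrix_inv (cw *\<^sub>R mat 1 + t *\<^sub>R Pw))
      - trace ((cv *\<^sub>R mat 1 + t *\<^sub>R Pv) ** (matrix_inv (cw *\<^sub>R mat 1 + t *\<^sub>R Pw) ** Qw ** matrix_inv (cw *\<^sub>R mat 1 + t *\<^sub>R Pw))))
      has_field_derivative (2 * cv / cw^3 * trace (Qw ** Pw) - (trace (Qv ** Pw) + trace (Pv ** Qw)) / cw^2)) (at 0)"
proof -
  define I0 :: "real^'n^'n" where "I0 = (1/cw) *\<^sub>R mat 1"
  have i0: "invertible (cw *\<^sub>R mat 1 + 0 *\<^sub>R Pw)" "matrix_inv (cw *\<^sub>R mat 1 + 0 *\<^sub>R Pw) = I0"
    using invertible_scalar_mat[of cw] matrix_inv_scalar_mat[of cw] cw by (auto simp: I0_def)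
  define N where "N = - (I0 ** Pw ** I0)"
  have MI: "has_matrix_derivative (\<lambda>t. matrix_inv (cw *\<^sub>R mat 1 + t *\<^sub>R Pw)) N 0"
    using has_matrix_derivative_inverse[OF has_matrix_derivative_affine i0(1)] unfolding i0(2) N_def .
  have M1: "has_matrix_derivative (\<lambda>t. Qv ** matrix_inv (cw *\<^sub>R mat 1 + t *\<^sub>R Pw)) (Qv ** N) 0"
    using has_matrix_derivative_mult[OF has_matrix_derivative_const MI] by simp
  have M2: "has_matrix_derivative (\<lambda>t. matrix_inv (cw *\<^sub>R mat 1 + t *\<^sub>R Pw) ** Qw) (N ** Qw) 0"
    using has_matrix_derivative_mult[OF MI has_matrix_derivative_const] by simp
  have M3: "has_matrix_derivative (\<lambda>t. matrix_inv (cw *\<^sub>R mat 1 + t *\<^sub>R Pw) ** Qw ** matrix_inv (cw *\<^sub>R mat 1 + t *\<^sub>R Pw))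
       (N ** Qw ** I0 + I0 ** Qw ** N) 0"
    using has_matrix_derivative_mult[OF M2 MI] i0 by simp
  have M4: "has_matrix_derivative (\<lambda>t. (cv *\<^sub>R mat 1 + t *\<^sub>R Pv) ** (matrix_inv (cw *\<^sub>R mat 1 + t *\<^sub>R Pw) ** Qw ** matrix_inv (cw *\<^sub>R mat 1 + t *\<^sub>R Pw)))
       (Pv ** (I0 ** Qw ** I0) + (cv *\<^sub>R mat 1) ** (N ** Qw ** I0 + I0 ** Qw ** N)) 0"
    using has_matrix_derivative_mult[OF has_matrix_derivative_affine M3] i0 by simp
  have "trace (Qv ** N) - trace (Pv ** (I0 ** Qw ** I0) + (cv *\<^sub>R mat 1) ** (N ** Qw ** I0 + I0 ** Qw ** N))
      = 2 * cv / cw^3 * trace (Qw ** Pw) - (trace (Qv ** Pw) + trace (Pv ** Qw)) / cw^2"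
    using cw trace_mul_sym[of Pw Qw]
    by (simp add: N_def I0_def matrix_scalar_ac matrix_mul_uminus_right matrix_mul_uminus_left
        trace_add trace_sub trace_scaleR trace_uminus power2_eq_square power3_eq_cube field_simps flip: scalar_matrix_assoc)
  then show ?thesis
    using DERIV_diff[OF has_matrix_derivative_trace[OF M1] has_matrix_derivative_trace[OF M4]] by simp
qed

lemma hessian_Phi_restr_at_scalar:
  fixes c :: "'v \<Rightarrow> real"
  assumes "finite V" and EV: "E \<subseteq> V \<times> V"
    and scalar: "\<forall>v\<in>V. c v > 0 \<and> assemble \<Gamma> z y v = c v *\<^sub>R mat 1"
  shows "hessian (Phi_restr E \<Gamma> z) y a b =
    (\<Sum>(v, w)\<in>E. 2 * c v / c w^3 * trace (coord_dir \<Gamma> a w ** coord_dir \<Gamma> b w)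
       - (trace (coord_dir \<Gamma> a v ** coord_dir \<Gamma> b w) + trace (coord_dir \<Gamma> b v ** coord_dir \<Gamma> a w)) / c w^2)"
proof -
  define P where "P = coord_dir \<Gamma> b"
  define Q where "Q = coord_dir \<Gamma> a"
  define G where "G t = (\<Sum>(v, w)\<in>E. trace (Q v ** matrix_inv (c w *\<^sub>R mat 1 + t *\<^sub>R P w))
      - trace ((c v *\<^sub>R mat 1 + t *\<^sub>R P v) ** (matrix_inv (c w *\<^sub>R mat 1 + t *\<^sub>R P w) ** Q w ** matrix_inv (c w *\<^sub>R mat 1 + t *\<^sub>R P w))))" for t
  have "eventually (\<lambda>t. det (c w *\<^sub>R mat 1 + t *\<^sub>R P w) \<noteq> 0) (nhds 0)" if "w \<in> V" for w
    using that scalar invertible_scalar_mat[of "c w"]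
    by (intro eventually_det_nonzero[OF has_matrix_derivative_affine]) auto
  then have "eventually (\<lambda>t. \<forall>w\<in>V. invertible (c w *\<^sub>R mat 1 + t *\<^sub>R P w)) (nhds 0)"
    by (simp add: eventually_ball_finite_distrib[OF \<open>finite V\<close>] invertible_det_nz)
  then have "eventually (\<lambda>t. partial (Phi_restr E \<Gamma> z) (shift y b t) a = G t) (nhds 0)"
  proof (rule eventually_mono)
    fix t assume inv: "\<forall>w\<in>V. invertible (c w *\<^sub>R mat 1 + t *\<^sub>R P w)"
    have X: "assemble \<Gamma> z (shift y b t) v = c v *\<^sub>R mat 1 + t *\<^sub>R P v" if "v \<in> V" for v
      using scalar that by (simp add: assemble_shift P_def)
    have inv_shift: "\<forall>(v, w)\<in>E. invertible (assemble \<Gamma> z (shift y b t) w)"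
      using inv X EV by auto
    show "partial (Phi_restr E \<Gamma> z) (shift y b t) a = G t"
      unfolding partial_Phi_restr[OF inv_shift] G_def Q_def using EV X by (intro sum.cong refl) auto
  qed
  then have "hessian (Phi_restr E \<Gamma> z) y a b = deriv G 0"
    unfolding hessian_def by (rule deriv_cong_ev) simp
  also have "\<dots> = (\<Sum>(v, w)\<in>E. 2 * c v / c w^3 * trace (Q w ** P w) - (trace (Q v ** P w) + trace (P v ** Q w)) / c w^2)"
  proof (rule DERIV_imp_deriv)
    show "(G has_field_derivative
        (\<Sum>(v, w)\<in>E. 2 * c v / c w^3 * trace (Q w ** P w) - (trace (Q v ** P w) + trace (P v ** Q w)) / c w^2)) (at 0)"
      unfolding G_def[abs_def]
    proof (rule DERIV_sum)
      fix e assume "e \<in> E"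
      then have "c (snd e) > 0"
        using EV scalar by auto
      from has_field_derivative_edge_partial_at_scalar[OF this, where Qv = "Q (fst e)" and Pv = "P (fst e)" and cv = "c (fst e)" and Pw = "P (snd e)" and Qw = "Q (snd e)"]
      show "((\<lambda>t. case e of (v, w) \<Rightarrow> trace (Q v ** matrix_inv (c w *\<^sub>R mat 1 + t *\<^sub>R P w))
          - trace ((c v *\<^sub>R mat 1 + t *\<^sub>R P v) ** (matrix_inv (c w *\<^sub>R mat 1 + t *\<^sub>R P w) ** Q w ** matrix_inv (c w *\<^sub>R mat 1 + t *\<^sub>R P w))))
        has_field_derivative (case e of (v, w) \<Rightarrow> 2 * c v / c w^3 * trace (Q w ** P w) - (trace (Q v ** P w) + trace (P v ** Q w)) / c w^2)) (at 0)"
        by (simp add: split_beta)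
    qed
  qed
  finally show ?thesis
    unfolding P_def Q_def .
qed

lemma partial_Phi_restr_diagonal_at_scalar:
  assumes EV: "E \<subseteq> V \<times> V" and "u \<notin> \<Gamma>"
    and scalar: "\<forall>v\<in>V. c v > 0 \<and> assemble \<Gamma> z y v = c v *\<^sub>R mat 1"
  shows "partial (Phi_restr E \<Gamma> z) y (u, i, i) = scalar_gradient E c u"
proof -
  have "invertible (assemble \<Gamma> z y w)" if "w \<in> V" for w
    using that scalar invertible_scalar_mat[of "c w"] by (metis less_irrefl)
  then have inv: "\<forall>(v, w)\<in>E. invertible (assemble \<Gamma> z y w)"
    using EV by auto
  have tr: "trace (coord_dir \<Gamma> (u, i, i) v) = (if v = u then 1 else 0)" for v
    using \<open>u \<notin> \<Gamma>\<close> by (auto simp: coord_dir_def trace_def sym_of_def)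
  have edge: "trace (coord_dir \<Gamma> (u, i, i) v ** matrix_inv (assemble \<Gamma> z y w))
      - trace (assemble \<Gamma> z y v ** (matrix_inv (assemble \<Gamma> z y w) ** coord_dir \<Gamma> (u, i, i) w ** matrix_inv (assemble \<Gamma> z y w)))
      = (if v = u then 1 / c w else 0) - (if w = u then c v / (c w)^2 else 0)"
    if "(v, w) \<in> E" for v w
  proof -
    have "v \<in> V" "w \<in> V"
      using that EV by auto
    then have "c w > 0" "assemble \<Gamma> z y v = c v *\<^sub>R mat 1" "matrix_inv (assemble \<Gamma> z y w) = (1 / c w) *\<^sub>R mat 1"
      using scalar matrix_inv_scalar_mat[of "c w"] by auto
    then show ?thesis
      by (simp add: matrix_scalar_ac trace_scaleR tr power2_eq_square flip: scalar_matrix_assoc)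
  qed
  show ?thesis
    unfolding partial_Phi_restr[OF inv] scalar_gradient_def
    by (rule sum.cong[OF refl]) (auto simp: edge)
qed

lemma finite_coords: "finite V \<Longrightarrow> finite (coords V \<Gamma>)"
  by (rule finite_subset[of _ "V \<times> UNIV"]) (auto simp: coords_def)

lemma sum_coord_dir_entry:
  assumes "finite V" and "(u, i, j) \<in> coords V \<Gamma>"
  shows "(\<Sum>a\<in>coords V \<Gamma>. h a *\<^sub>R coord_dir \<Gamma> a u) $ i $ j = h (u, i, j)"
proof -
  have entry: "coord_dir \<Gamma> a u $ i $ j = (if a = (u, i, j) then 1 else 0)" for a
    using assms(2) by (cases a) (auto simp: coords_def coord_dir_def sym_of_def)
  show ?thesis
    unfolding sum_component vector_scaleR_component entry
    using assms(2) by (simp add: if_distrib sum.delta[OF finite_coords[OF assms(1)]] cong: if_cong)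
qed

lemma hessian_form_Phi_restr_at_scalar:
  fixes h :: "'v \<times> 'd::{finite,linorder} \<times> 'd \<Rightarrow> real"
  assumes "finite V" and "E \<subseteq> V \<times> V"
    and "\<forall>v\<in>V. c v > 0 \<and> assemble \<Gamma> z y v = c v *\<^sub>R mat 1"
  defines "H \<equiv> \<lambda>v. \<Sum>a\<in>coords V \<Gamma>. h a *\<^sub>R coord_dir \<Gamma> a v"
  shows "(\<Sum>a\<in>coords V \<Gamma>. \<Sum>b\<in>coords V \<Gamma>. h a * h b * hessian (Phi_restr E \<Gamma> z) y a b)
    = 2 * (\<Sum>i\<in>UNIV. \<Sum>k\<in>UNIV. edge_quadratic_form E c (\<lambda>v. H v $ i $ k))"
proof -
  let ?C = "coords V \<Gamma>"
  have C: "finite ?C"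
    using assms(1) by (rule finite_coords)
  have H_sym: "H v $ k $ i = H v $ i $ k" for v i k
    unfolding H_def sum_component vector_scaleR_component
    by (rule sum.cong[OF refl]) (metis coord_dir_symmetric)
  have "(\<Sum>a\<in>?C. \<Sum>b\<in>?C. h a * h b * hessian (Phi_restr E \<Gamma> z) y a b)
      = (\<Sum>(v, w)\<in>E. \<Sum>a\<in>?C. \<Sum>b\<in>?C. h a * h b * (2 * c v / c w^3 * trace (coord_dir \<Gamma> a w ** coord_dir \<Gamma> b w)
          - (trace (coord_dir \<Gamma> a v ** coord_dir \<Gamma> b w) + trace (coord_dir \<Gamma> b v ** coord_dir \<Gamma> a w)) / c w^2))"
    unfolding hessian_Phi_restr_at_scalar[OF assms(1-3)]
    by (simp add: sum_distrib_left sum.swap[of _ E] split_def)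
  also have "\<dots> = (\<Sum>(v, w)\<in>E. 2 * c v / c w^3 * trace (H w ** H w) - 2 * trace (H v ** H w) / c w^2)"
  proof (rule sum.cong[OF refl], clarify)
    fix v w
    have swap: "(\<Sum>a\<in>?C. \<Sum>b\<in>?C. h a * h b * trace (coord_dir \<Gamma> b v ** coord_dir \<Gamma> a w))
        = (\<Sum>a\<in>?C. \<Sum>b\<in>?C. h a * h b * trace (coord_dir \<Gamma> a v ** coord_dir \<Gamma> b w))"
      by (subst sum.swap) (simp add: mult.commute)
    let ?S = "\<lambda>f. \<Sum>a\<in>?C. \<Sum>b\<in>?C. h a * h b * f a b"
    have "?S (\<lambda>a b. 2 * c v / c w^3 * trace (coord_dir \<Gamma> a w ** coord_dir \<Gamma> b w)
          - (trace (coord_dir \<Gamma> a v ** coord_dir \<Gamma> b w) + trace (coord_dir \<Gamma> b v ** coord_dir \<Gamma> a w)) / c w^2)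
        = 2 * c v / c w^3 * ?S (\<lambda>a b. trace (coord_dir \<Gamma> a w ** coord_dir \<Gamma> b w))
          - (?S (\<lambda>a b. trace (coord_dir \<Gamma> a v ** coord_dir \<Gamma> b w)) + ?S (\<lambda>a b. trace (coord_dir \<Gamma> b v ** coord_dir \<Gamma> a w))) / c w^2"
      by (simp add: sum_subtractf sum.distrib sum_distrib_left sum_divide_distrib add_divide_distrib
          right_diff_distrib distrib_left mult_ac)
    also have "\<dots> = 2 * c v / c w^3 * trace (H w ** H w) - 2 * trace (H v ** H w) / c w^2"
      unfolding swap H_def trace_sum_scaleR_bilinear[OF C] by simp
    finally show "?S (\<lambda>a b. 2 * c v / c w^3 * trace (coord_dir \<Gamma> a w ** coord_dir \<Gamma> b w)
          - (trace (coord_dir \<Gamma> a v ** coord_dir \<Gamma> b w) + trace (coord_dir \<Gamma> b v ** coord_dir \<Gamma> a w)) / c w^2)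
        = 2 * c v / c w^3 * trace (H w ** H w) - 2 * trace (H v ** H w) / c w^2" .
  qed
  also have "\<dots> = (\<Sum>(v, w)\<in>E. \<Sum>i\<in>UNIV. \<Sum>k\<in>UNIV. 2 * (c v * (H w $ i $ k)^2 / (c w)^3 - H v $ i $ k * H w $ i $ k / (c w)^2))"
    unfolding trace_mul_symmetric[OF H_sym]
    by (simp add: sum_distrib_left sum_subtractf sum_divide_distrib power2_eq_square algebra_simps)
  also have "\<dots> = 2 * (\<Sum>i\<in>UNIV. \<Sum>k\<in>UNIV. edge_quadratic_form E c (\<lambda>v. H v $ i $ k))"
    unfolding edge_quadratic_form_def sum_distrib_left split_def
    by (subst (2) sum.swap, subst sum.swap) (rule refl)
  finally show ?thesis .
qed

lemma scalar_gradient_eq_0_at_critical: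
  fixes y :: "'v \<Rightarrow> 'd::{finite,linorder} \<Rightarrow> 'd \<Rightarrow> real"
  assumes "E \<subseteq> V \<times> V" and "\<forall>v\<in>V. c v > 0 \<and> assemble \<Gamma> z y v = c v *\<^sub>R mat 1"
    and "\<forall>a\<in>coords V \<Gamma>. partial (Phi_restr E \<Gamma> z) y a = 0" and "u \<in> V - \<Gamma>"
  shows "scalar_gradient E c u = 0"
proof -
  fix i :: 'd
  have "(u, i, i) \<in> coords V \<Gamma>"
    using assms(4) by (simp add: coords_def)
  then show ?thesis
    using assms(3,4) partial_Phi_restr_diagonal_at_scalar[OF assms(1) _ assms(2), of u i] by simp
qed

lemma sum_edge_quadratic_form_entries_pos:
  fixes X :: "'v \<Rightarrow> real^'n^'m"
  assumes "finite V" and "E \<subseteq> V \<times> V" and "acyclic E" and "sinks V E \<subseteq> \<Gamma>" and "\<forall>v\<in>V. c v > 0"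
    and "\<forall>u\<in>V - \<Gamma>. scalar_gradient E c u = 0" and "\<forall>v\<in>\<Gamma>. X v = 0"
    and "u \<in> V" and "X u $ i $ j \<noteq> 0"
  shows "(\<Sum>p\<in>UNIV. \<Sum>q\<in>UNIV. edge_quadratic_form E c (\<lambda>v. X v $ p $ q)) > 0"
proof -
  have X_Gamma: "\<forall>v\<in>\<Gamma>. X v $ p $ q = 0" for p q
    using assms(7) by simp
  have "edge_quadratic_form E c (\<lambda>v. X v $ p $ q) \<ge> 0" for p q
    using edge_quadratic_form_nonneg[OF assms(1,2,5) X_Gamma assms(6)] .
  moreover have "edge_quadratic_form E c (\<lambda>v. X v $ i $ j) > 0"
    using assms(8,9) by (intro edge_quadratic_form_pos[OF assms(1-5) X_Gamma assms(6)]) blast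
  ultimately show ?thesis
    by (intro sum_pos2[of _ i] sum_pos2[of _ j] sum_nonneg) auto
qed

theorem mainTheorem17:
  fixes V \<Gamma> :: "'v set" and E :: "('v \<times> 'v) set"
    and z :: "'v \<Rightarrow> real^'d::{finite,linorder}^'d::{finite,linorder}" and y :: "'v \<Rightarrow> 'd::{finite,linorder} \<Rightarrow> 'd::{finite,linorder} \<Rightarrow> real"
  assumes "finite V" and "E \<subseteq> V \<times> V" and "acyclic E"
    and "\<Gamma> \<subseteq> V" and "sinks V E \<subseteq> \<Gamma>" and "sources V E \<subseteq> \<Gamma>" and "V - \<Gamma> \<noteq> {}"
    and "\<forall>v\<in>\<Gamma>. \<exists>c>0. z v = c *\<^sub>R mat 1"
    and "\<forall>v\<in>V. \<exists>c>0. assemble \<Gamma> z y v = c *\<^sub>R mat 1"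
    and "\<forall>a\<in>coords V \<Gamma>. partial (Phi_restr E \<Gamma> z) y a = 0"
  shows "\<forall>h. (\<exists>a\<in>coords V \<Gamma>. h a \<noteq> 0) \<longrightarrow>
           (\<Sum>a\<in>coords V \<Gamma>. \<Sum>b\<in>coords V \<Gamma>. h a * h b * hessian (Phi_restr E \<Gamma> z) y a b) > 0"
proof (intro allI impI)
  fix h :: "'v \<times> 'd \<times> 'd \<Rightarrow> real"
  assume "\<exists>a\<in>coords V \<Gamma>. h a \<noteq> 0"
  then obtain u i j where a: "(u, i, j) \<in> coords V \<Gamma>" and "h (u, i, j) \<noteq> 0"
    by auto
  obtain c where scalar: "\<forall>v\<in>V. c v > 0 \<and> assemble \<Gamma> z y v = c v *\<^sub>R mat 1"
    using assms(9) by metis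
  define H where "H v = (\<Sum>a\<in>coords V \<Gamma>. h a *\<^sub>R coord_dir \<Gamma> a v)" for v
  have "\<forall>u\<in>V - \<Gamma>. scalar_gradient E c u = 0"
    using scalar_gradient_eq_0_at_critical[OF assms(2) scalar assms(10)] by blast
  moreover have "\<forall>v\<in>\<Gamma>. H v = 0"
    by (simp add: H_def coord_dir_def split_def)
  moreover have "u \<in> V" and "H u $ i $ j \<noteq> 0"
    using a \<open>h (u, i, j) \<noteq> 0\<close> sum_coord_dir_entry[OF assms(1) a] by (auto simp: H_def coords_def)
  ultimately have "(\<Sum>p\<in>UNIV. \<Sum>q\<in>UNIV. edge_quadratic_form E c (\<lambda>v. H v $ p $ q)) > 0"
    using scalar by (intro sum_edge_quadratic_form_entries_pos[OF assms(1,2,3,5)]) auto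
  then show "(\<Sum>a\<in>coords V \<Gamma>. \<Sum>b\<in>coords V \<Gamma>. h a * h b * hessian (Phi_restr E \<Gamma> z) y a b) > 0"
    unfolding hessian_form_Phi_restr_at_scalar[OF assms(1,2) scalar] H_def by simp
qed

end
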